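(* Under the hypotheses and notation of the context, let $\mathcal{S}=\{x_1,\dots,x_k\}\times\mathbb{R}$. Let $\theta^{\mathrm{approx}}$ be any gradient-based update of $\theta^{\mathrm{full}}$ in which every dataset $D_t$ used satisfies $D_t\subseteq\mathcal{S}$. Then $$\|\theta^{\setminus k}-\theta^{\mathrm{res}}\|_2\le\|\theta^{\setminus k}-\theta^{\mathrm{approx}}\|_2 .$$
   Context: Let $x_1,\dots,x_n\in\mathbb{R}^d$, $y_1,\dots,y_n\in\mathbb{R}$, $1\le k\le d$, $n-k\ge d$, with the $x_i$ in general position, and fix $\lambda\ge0$. $X$ is the matrix with rows $x_i^\intercal$, $Y=(y_i)$. $\theta^{\mathrm{full}}=\arg\min_\theta\sum_{i=1}^n\frac12(\theta^\intercal x_i-y_i)^2+\frac\lambda2\|\theta\|^2$ and $\theta^{\setminus k}=\arg\min_\theta\sum_{i=k+1}^n\frac12(\theta^\intercal x_i-y_i)^2+\frac\lambda2\|\theta\|^2$. With $\hat y^{\setminus k}_i=(\theta^{\setminus k})^\intercal x_i$ and $A$ the Moore–Penrose pseudoinverse of $\sum_{i=1}^k x_ix_i^\intercal$, the projective residual update is $\theta^{\mathrm{res}}=\theta^{\mathrm{full}}-A\sum_{i=1}^k((\theta^{\mathrm{full}})^\intercal x_i-\hat y^{\setminus k}_i)x_i$. For a finite dataset $D=\{(\bar x_i,\bar y_i)\}_{i=1}^N$ set $L^D(\theta)=\sum_{i=1}^N\frac12(\theta^\intercal\bar x_i-\bar y_i)^2$. A gradient-based update of $\theta^{\mathrm{full}}$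 is any vector $\theta^{\mathrm{approx}}=\theta_T$ obtained by $\theta_0=\theta^{\mathrm{full}}$, $\theta_{t+1}=\theta_t-\alpha_t\nabla_\theta L^{D_t}(\theta_t)$ for some $T\ge0$, scalars $\alpha_t\in\mathbb{R}$ and finite datasets $D_t$. *)

theory Defs
  imports "HOL-Analysis.Analysis"
begin

definition general_position :: "(nat \<Rightarrow> real^'d) \<Rightarrow> nat set \<Rightarrow> bool" where
  "general_position x I \<longleftrightarrow>
     (\<forall>S. S \<subseteq> I \<and> card S \<le> CARD('d) \<longrightarrow> inj_on x S \<and> independent (x ` S))"

definition ridge_obj :: "(nat \<Rightarrow> real^'d) \<Rightarrow> (nat \<Rightarrow> real) \<Rightarrow> real \<Rightarrow> nat set \<Rightarrow> real^'d \<Rightarrow> real" where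
  "ridge_obj x y lam I \<theta> = (\<Sum>i\<in>I. (1/2) * (\<theta> \<bullet> x i - y i)^2) + (lam/2) * (norm \<theta>)^2"

definition is_argmin :: "('a \<Rightarrow> real) \<Rightarrow> 'a \<Rightarrow> bool" where
  "is_argmin f z \<longleftrightarrow> (\<forall>w. f z \<le> f w)"

definition outer :: "real^'d \<Rightarrow> real^'d^'d" where
  "outer v = (\<chi> i j. v$i * v$j)"

definition pinv :: "real^'d^'d \<Rightarrow> real^'d^'d" where
  "pinv M = (THE B. M ** B ** M = M \<and> B ** M ** B = B \<and>
                    transpose (M ** B) = M ** B \<and> transpose (B ** M) = B ** M)"

definition loss :: "((real^'d) \<times> real) list \<Rightarrow> real^'d \<Rightarrow> real" where
  "loss D \<theta> = (\<Sum>p\<leftarrow>D. (1/2) * (\<theta> \<bullet> fst p - snd p)^2)"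

definition grad_update_within :: "((real^'d) \<times> real) set \<Rightarrow> real^'d \<Rightarrow> real^'d \<Rightarrow> bool" where
  "grad_update_within S \<theta>0 \<theta>a \<longleftrightarrow>
     (\<exists>(T::nat) (\<alpha>::nat \<Rightarrow> real) (D::nat \<Rightarrow> ((real^'d) \<times> real) list) (\<theta>s::nat \<Rightarrow> real^'d).
        \<theta>s 0 = \<theta>0 \<and> \<theta>s T = \<theta>a \<and>
        (\<forall>t<T. set (D t) \<subseteq> S \<and>
           (\<exists>g. (GDERIV (loss (D t)) (\<theta>s t) :> g) \<and> \<theta>s (Suc t) = \<theta>s t - \<alpha> t *\<^sub>R g)))"

end

theory Submission
  imports Defs
begin

text \<open>Write \<open>u = \<theta>full - \<theta>k\<close>, \<open>M = x\<^sub>1 x\<^sub>1\<^sup>T + \<dots> + x\<^sub>k x\<^sub>k\<^sup>T\<close> and \<open>P = M\<^sup>+ M\<close>, the orthogonal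
  projector onto \<open>X = span {x\<^sub>1, \<dots>, x\<^sub>k}\<close>. Then \<open>\<theta>k - \<theta>res = -(u - P u)\<close>, and \<open>u - P u\<close> is
  orthogonal to \<open>X\<close> because \<open>M (u - P u) = 0\<close>. Every gradient of a loss on data with inputs in
  \<open>{x\<^sub>1, \<dots>, x\<^sub>k}\<close> lies in \<open>X\<close>, so \<open>\<theta>k - \<theta>approx = -(u - P u) - w\<close> with \<open>w \<in> X\<close>, and
  Pythagoras finishes.\<close>

lemma symmetric_matrix_inner:
  fixes M :: "real^'n^'n"
  assumes "transpose M = M"
  shows "(M *v u) \<bullet> v = u \<bullet> (M *v v)"
  by (metis assms dot_lmul_matrix inner_commute vector_transpose_matrix)

lemma symmetric_matrix_if_inner:
  fixes M :: "real^'n^'n"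
  assumes "\<And>u v. (M *v u) \<bullet> v = u \<bullet> (M *v v)"
  shows "transpose M = M"
proof -
  have "transpose M *v u = M *v u" for u
    using assms by (metis dot_lmul_matrix transpose_matrix_vector vector_eq_rdot)
  then show ?thesis by (simp add: matrix_eq)
qed

lemma sum_outer_mult_vec:
  "(\<Sum>i\<in>I. outer (f i)) *v w = (\<Sum>i\<in>I. (f i \<bullet> w) *\<^sub>R f i)"
proof (induction I rule: infinite_finite_induct)
  case (insert a F)
  have "outer (f a) *v w = (f a \<bullet> w) *\<^sub>R f a"
    by (simp add: outer_def matrix_vector_mult_def vec_eq_iff inner_vec_def sum_distrib_left mult_ac)
  with insert show ?case by (simp add: matrix_vector_mult_add_rdistrib)
qed (simp_all add: matrix_vector_mult_def vec_eq_iff)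

lemma transpose_sum_outer: "transpose (\<Sum>i\<in>I. outer (f i)) = (\<Sum>i\<in>I. outer (f i))"
  by (rule symmetric_matrix_if_inner)
     (simp add: sum_outer_mult_vec inner_sum_left inner_sum_right mult.commute inner_commute)

lemma penrose_unique:
  fixes M :: "real^'n^'m" and B C :: "real^'m^'n"
  assumes "M ** B ** M = M" "B ** M ** B = B" "transpose (M ** B) = M ** B" "transpose (B ** M) = B ** M"
    and "M ** C ** M = M" "C ** M ** C = C" "transpose (M ** C) = M ** C" "transpose (C ** M) = C ** M"
  shows "B = C"
proof -
  have "B = B ** transpose (M ** B)" using assms(2,3) by (simp add: matrix_mul_assoc)
  also have "\<dots> = B ** transpose (M ** C ** M ** B)" using assms(5) by simp
  also have "\<dots> = B ** M ** C"
    using assms(1,3,7) by (simp add: matrix_transpose_mul matrix_mul_assoc)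
  finally have BC: "B = B ** M ** C" .
  have "C = transpose (C ** M) ** C" using assms(6,8) by (simp add: matrix_mul_assoc)
  also have "\<dots> = transpose (C ** M ** B ** M) ** C" using assms(1) by (metis matrix_mul_assoc)
  also have "\<dots> = transpose (B ** M) ** transpose (C ** M) ** C"
    by (simp add: matrix_transpose_mul matrix_mul_assoc)
  also have "\<dots> = B ** M ** (C ** M ** C)" using assms(4,8) by (simp add: matrix_mul_assoc)
  also have "\<dots> = B ** M ** C" using assms(6) by simp
  finally show ?thesis using BC by simp
qed

lemma orthogonal_projection_matrix_exists:
  fixes S :: "(real^'n) set"
  assumes "subspace S"
  obtains Q :: "real^'n^'n"
    where "transpose Q = Q" "\<And>x. Q *v x \<in> S" "\<And>s. s \<in> S \<Longrightarrow> Q *v s = s"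
proof -
  obtain B where B: "B \<subseteq> S" "pairwise orthogonal B" "\<And>b. b \<in> B \<Longrightarrow> norm b = 1"
    "independent B" "span B = S"
    using orthonormal_basis_subspace[OF assms] by metis
  define Q where "Q = (\<Sum>b\<in>B. outer b)"
  have Qv: "Q *v x = (\<Sum>b\<in>B. (b \<bullet> x) *\<^sub>R b)" for x
    unfolding Q_def by (rule sum_outer_mult_vec)
  have Qb: "Q *v b = b" if "b \<in> B" for b
  proof -
    have "(c \<bullet> b) *\<^sub>R c = (if c = b then b else 0)" if "c \<in> B" for c
      using B(2,3) \<open>b \<in> B\<close> that
      by (auto simp: pairwise_def orthogonal_def dot_square_norm)
    then show ?thesis
      using that independent_imp_finite[OF B(4)] by (simp add: Qv)
  qed
  have "Q *v s = s" if "s \<in> span B" for s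
    using linear_eq_on_span[OF matrix_vector_mul_linear linear_id, of B Q s] that Qb by simp
  moreover have "Q *v x \<in> S" for x
    unfolding Qv using B(1) assms by (intro subspace_sum subspace_scale) auto
  ultimately show ?thesis
    using that[of Q] B(5) by (simp add: Q_def transpose_sum_outer)
qed

lemma inj_add_range_complement:
  fixes M Q :: "real^'n^'n"
  assumes "transpose M = M" "transpose Q = Q" "Q ** Q = Q" "Q ** M = M"
    and "\<And>x. Q *v x \<in> range ((*v) M)"
  shows "inj ((*v) (M + mat 1 - Q))"
proof -
  have "z = 0" if z: "(M + mat 1 - Q) *v z = 0" for z
  proof -
    \<comment> \<open>\<open>M z\<close> lies in the range of \<open>Q\<close> and \<open>z - Q z\<close> in its kernel, so they are orthogonal.\<close>
    have "(z - Q *v z) \<bullet> (M *v z) = (Q *v (z - Q *v z)) \<bullet> (M *v z)"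
      by (metis assms(2,4) matrix_vector_mul_assoc symmetric_matrix_inner)
    also have "\<dots> = 0"
      using assms(3) by (simp add: matrix_vector_mult_diff_distrib matrix_vector_mul_assoc)
    moreover have Mz_eq: "M *v z = - (z - Q *v z)"
      using z by (simp add: matrix_vector_mult_add_rdistrib matrix_vector_mult_diff_rdistrib
          algebra_simps)
    ultimately have "(M *v z) \<bullet> (M *v z) = 0"
      by (metis inner_minus_left neg_equal_0_iff_equal)
    then have Mz: "M *v z = 0" by simp
    then have "z = Q *v z" using Mz_eq by simp
    then obtain w where "z = M *v w" using assms(5) by (metis rangeE)
    then have "z \<bullet> z = w \<bullet> (M *v z)" by (metis assms(1) symmetric_matrix_inner)
    then show ?thesis using Mz by simp
  qed
  then show ?thesis by (simp add: linear_injective_0[OF matrix_vector_mul_linear])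
qed

text \<open>With \<open>Q\<close> the orthogonal projector onto the range of \<open>M\<close>, the matrix \<open>N = M + I - Q\<close> is
  invertible and \<open>N\<^sup>-\<^sup>1 Q\<close> satisfies the Penrose equations.\<close>

lemma pinv_exists_symmetric:
  fixes M :: "real^'n^'n"
  assumes sym: "transpose M = M"
  shows "\<exists>B. M ** B ** M = M \<and> B ** M ** B = B \<and>
             transpose (M ** B) = M ** B \<and> transpose (B ** M) = B ** M"
proof -
  have "subspace (range ((*v) M))"
    by (rule linear_subspace_image[OF matrix_vector_mul_linear subspace_UNIV])
  then obtain Q :: "real^'n^'n" where Q: "transpose Q = Q" "\<And>x. Q *v x \<in> range ((*v) M)"
    "\<And>s. s \<in> range ((*v) M) \<Longrightarrow> Q *v s = s"
    using orthogonal_projection_matrix_exists by blast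
  have QQ: "Q ** Q = Q" and QM: "Q ** M = M"
    using Q(2,3) by (simp_all add: matrix_eq flip: matrix_vector_mul_assoc)
  have MQ: "M ** Q = M" by (metis QM Q(1) sym matrix_transpose_mul)
  define N where "N = M + mat 1 - Q"
  have "inj ((*v) N)" unfolding N_def by (rule inj_add_range_complement[OF sym Q(1) QQ QM Q(2)])
  then obtain N' where N'N: "N' ** N = mat 1" using matrix_left_invertible_injective by blast
  then have NN': "N ** N' = mat 1" using matrix_left_right_inverse by blast
  have "Q *v (Q *v x) = Q *v x" "Q *v (M *v x) = M *v x" "M *v (Q *v x) = M *v x" for x
    by (simp_all add: matrix_vector_mul_assoc QQ QM MQ)
  then have NQ: "N ** Q = M" and QN: "Q ** N = M"
    by (simp_all add: N_def matrix_eq matrix_vector_mult_add_rdistrib matrix_vector_mult_diff_rdistrib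
        matrix_vector_mult_diff_distrib matrix_vector_right_distrib flip: matrix_vector_mul_assoc)
  define B where "B = N' ** Q"
  have "M ** B = Q ** (N ** N') ** Q" by (simp add: B_def flip: QN) (simp add: matrix_mul_assoc)
  then have MB: "M ** B = Q" by (simp add: NN' QQ)
  have "B ** M = N' ** (N ** Q)" by (simp add: B_def NQ QM flip: matrix_mul_assoc)
  also have "\<dots> = Q" by (simp add: matrix_mul_assoc N'N)
  finally have BM: "B ** M = Q" .
  have "B ** M ** B = B ** Q" by (simp only: MB flip: matrix_mul_assoc)
  then have "B ** M ** B = B" by (simp add: B_def QQ flip: matrix_mul_assoc)
  then show ?thesis using MB BM QM Q(1) by auto
qed

lemma pinv_symmetric:
  fixes M :: "real^'n^'n"
  assumes "transpose M = M"
  shows "M ** pinv M ** M = M" "pinv M ** M ** pinv M = pinv M"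
    "transpose (M ** pinv M) = M ** pinv M" "transpose (pinv M ** M) = pinv M ** M"
proof -
  obtain B where B: "M ** B ** M = M \<and> B ** M ** B = B \<and>
      transpose (M ** B) = M ** B \<and> transpose (B ** M) = B ** M"
    using pinv_exists_symmetric[OF assms] by blast
  have "M ** pinv M ** M = M \<and> pinv M ** M ** pinv M = pinv M \<and>
      transpose (M ** pinv M) = M ** pinv M \<and> transpose (pinv M ** M) = pinv M ** M"
    unfolding pinv_def by (rule theI[where a = B]) (use B penrose_unique in \<open>meson+\<close>)
  then show "M ** pinv M ** M = M" "pinv M ** M ** pinv M = pinv M"
    "transpose (M ** pinv M) = M ** pinv M" "transpose (pinv M ** M) = pinv M ** M"
    by auto
qed

lemma orthogonal_residual_projection:
  fixes P :: "real^'n^'n"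
  assumes "transpose P = P" "P ** P = P"
  shows "orthogonal (u - P *v u) (P *v v)"
proof -
  have "(u - P *v u) \<bullet> (P *v v) = (P *v (u - P *v u)) \<bullet> v"
    using assms(1) by (simp add: symmetric_matrix_inner)
  also have "\<dots> = 0"
    using assms(2) by (simp add: matrix_vector_mult_diff_distrib matrix_vector_mul_assoc)
  finally show ?thesis by (simp add: orthogonal_def)
qed

lemma gram_kernel_orthogonal_span:
  assumes "finite I" "(\<Sum>i\<in>I. outer (x i)) *v z = 0" "v \<in> span (x ` I)"
  shows "orthogonal z v"
proof -
  have "(\<Sum>i\<in>I. (x i \<bullet> z)\<^sup>2) = z \<bullet> ((\<Sum>i\<in>I. outer (x i)) *v z)"
    by (simp add: sum_outer_mult_vec inner_sum_right inner_commute power2_eq_square)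
  then have "\<forall>i\<in>I. (x i \<bullet> z)\<^sup>2 = 0"
    using assms(1,2) by (simp add: sum_nonneg_eq_0_iff)
  then have "\<And>w. w \<in> x ` I \<Longrightarrow> orthogonal z w"
    by (auto simp: orthogonal_def inner_commute)
  then show ?thesis using orthogonal_to_span[OF assms(3)] by blast
qed

lemma norm_le_norm_add_orthogonal:
  fixes z w :: "'a::real_inner"
  assumes "orthogonal z w"
  shows "norm z \<le> norm (z + w)"
proof (rule power2_le_imp_le)
  show "(norm z)\<^sup>2 \<le> (norm (z + w))\<^sup>2" by (simp add: norm_add_Pythagorean[OF assms])
qed simp

lemma GDERIV_loss: "GDERIV (loss D) \<theta> :> (\<Sum>p\<leftarrow>D. (\<theta> \<bullet> fst p - snd p) *\<^sub>R fst p)"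
proof (induction D)
  case Nil
  then show ?case by (simp add: loss_def GDERIV_const)
next
  case (Cons p D)
  have "GDERIV (\<lambda>\<theta>. \<theta> \<bullet> fst p - snd p) \<theta> :> fst p"
    unfolding gderiv_def by (auto intro!: derivative_eq_intros simp: inner_commute)
  moreover have "DERIV (\<lambda>t. (1/2) * t\<^sup>2) (\<theta> \<bullet> fst p - snd p) :> \<theta> \<bullet> fst p - snd p"
    by (auto intro!: derivative_eq_intros)
  ultimately have "GDERIV (\<lambda>\<theta>. (1/2) * (\<theta> \<bullet> fst p - snd p)\<^sup>2) \<theta> :> (\<theta> \<bullet> fst p - snd p) *\<^sub>R fst p"
    using GDERIV_DERIV_compose by fastforce
  from GDERIV_add[OF this Cons.IH] show ?case by (simp add: loss_def)
qed

lemma GDERIV_unique: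
  fixes g g' :: "'a::real_inner"
  assumes "GDERIV f x :> g" "GDERIV f x :> g'"
  shows "g = g'"
proof -
  have "(\<lambda>h. h \<bullet> g) = (\<lambda>h. h \<bullet> g')"
    using has_derivative_unique assms unfolding gderiv_def by blast
  then show ?thesis by (metis vector_eq_ldot)
qed

lemma GDERIV_loss_in_span:
  assumes "set D \<subseteq> X \<times> UNIV" "GDERIV (loss D) \<theta> :> g"
  shows "g \<in> span X"
proof -
  have "(\<Sum>p\<leftarrow>D. c p *\<^sub>R fst p) \<in> span X" for c :: "_ \<Rightarrow> real"
    using assms(1) by (induction D) (fastforce intro: span_add span_scale span_base simp: span_zero)+
  then show ?thesis using GDERIV_unique[OF assms(2) GDERIV_loss] by simp
qed

lemma grad_update_within_span:
  assumes "grad_update_within (X \<times> UNIV) \<theta>0 \<theta>a"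
  shows "\<theta>a - \<theta>0 \<in> span X"
proof -
  obtain T \<alpha> D \<theta>s where \<theta>s: "\<theta>s 0 = \<theta>0" "\<theta>s T = \<theta>a"
    and step: "\<And>t. t < T \<Longrightarrow> set (D t) \<subseteq> X \<times> UNIV \<and>
        (\<exists>g. (GDERIV (loss (D t)) (\<theta>s t) :> g) \<and> \<theta>s (Suc t) = \<theta>s t - \<alpha> t *\<^sub>R g)"
    using assms unfolding grad_update_within_def by blast
  have "t \<le> T \<Longrightarrow> \<theta>s t - \<theta>0 \<in> span X" for t
  proof (induction t)
    case 0
    then show ?case using \<theta>s(1) by (simp add: span_zero)
  next
    case (Suc t)
    then obtain g where g: "GDERIV (loss (D t)) (\<theta>s t) :> g" "\<theta>s (Suc t) = \<theta>s t - \<alpha> t *\<^sub>R g"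
      and "set (D t) \<subseteq> X \<times> UNIV"
      using step[of t] by auto
    then have "g \<in> span X" by (intro GDERIV_loss_in_span)
    then have "(\<theta>s t - \<theta>0) - \<alpha> t *\<^sub>R g \<in> span X"
      using Suc by (simp add: span_diff span_scale)
    moreover have "\<theta>s (Suc t) - \<theta>0 = (\<theta>s t - \<theta>0) - \<alpha> t *\<^sub>R g" using g(2) by simp
    ultimately show ?case by (simp only:)
  qed
  then show ?thesis using \<theta>s(2) by blast
qed

theorem corollary2:
  fixes x :: "nat \<Rightarrow> real^'d" and y :: "nat \<Rightarrow> real"
    and n k :: nat and lam :: real
    and \<theta>full \<theta>k \<theta>approx :: "real^'d"
  assumes "1 \<le> k" "k \<le> CARD('d)" "n - k \<ge> CARD('d)" "k \<le> n"
    and "general_position x {1..n}"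
    and "lam \<ge> 0"
    and "is_argmin (ridge_obj x y lam {1..n}) \<theta>full"
    and "is_argmin (ridge_obj x y lam {k+1..n}) \<theta>k"
    and "grad_update_within ((x ` {1..k}) \<times> UNIV) \<theta>full \<theta>approx"
  shows "let A = pinv (\<Sum>i\<in>{1..k}. outer (x i));
             \<theta>res = \<theta>full - A *v (\<Sum>i\<in>{1..k}. (\<theta>full \<bullet> x i - \<theta>k \<bullet> x i) *\<^sub>R x i)
         in norm (\<theta>k - \<theta>res) \<le> norm (\<theta>k - \<theta>approx)"
proof -
  define M where "M = (\<Sum>i\<in>{1..k}. outer (x i))"
  define P where "P = pinv M ** M"
  define u where "u = \<theta>full - \<theta>k"
  define z where "z = u - P *v u"
  have M: "transpose M = M" unfolding M_def by (rule transpose_sum_outer)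
  have "(\<Sum>i\<in>{1..k}. (\<theta>full \<bullet> x i - \<theta>k \<bullet> x i) *\<^sub>R x i) = M *v u"
    unfolding M_def u_def sum_outer_mult_vec by (simp add: inner_diff_right inner_commute)
  then have res: "\<theta>k - (\<theta>full - pinv M *v (\<Sum>i\<in>{1..k}. (\<theta>full \<bullet> x i - \<theta>k \<bullet> x i) *\<^sub>R x i)) = - z"
    by (simp add: z_def P_def u_def matrix_vector_mul_assoc)
  have "M *v z = 0"
    using pinv_symmetric(1)[OF M] by (simp add: z_def P_def matrix_vector_mult_diff_distrib
        matrix_vector_mul_assoc matrix_mul_assoc)
  then have "orthogonal z (\<theta>approx - \<theta>full)"
    using gram_kernel_orthogonal_span grad_update_within_span[OF assms(9)] unfolding M_def by blast
  moreover have "orthogonal z (P *v u)"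
    unfolding z_def P_def
    by (rule orthogonal_residual_projection) (use pinv_symmetric[OF M] in \<open>simp_all add: matrix_mul_assoc\<close>)
  ultimately have "norm z \<le> norm (z + (P *v u + (\<theta>approx - \<theta>full)))"
    by (intro norm_le_norm_add_orthogonal) (simp add: orthogonal_clauses)
  also have "z + (P *v u + (\<theta>approx - \<theta>full)) = \<theta>approx - \<theta>k"
    by (simp add: z_def u_def)
  also have "norm \<dots> = norm (\<theta>k - \<theta>approx)" by (rule norm_minus_commute)
  finally show ?thesis using res unfolding M_def Let_def by simp
qed

end
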